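(* For every real number $p$ with $0 \leq p \leq \frac{1}{2}$, there is a many-one degree $\mathbf{a}$ such that $\Gamma_m(\mathbf{a}) = p$.
   Context: For $Z \subseteq \omega$, the lower density of $Z$ is $\underline{\rho}(Z) := \liminf_{n \to \infty} \frac{|Z \cap [0,n)|}{n}$. For sets $A, R \subseteq \omega$, let $A \leftrightarrow R := \{ x \mid x \in A \Longleftrightarrow x \in R \}$ be the set on which $A$ and $R$ agree. The coarse computability bound of a set $A \subseteq \omega$ is $\gamma(A) := \sup\{\underline{\rho}(A \leftrightarrow R) \mid R \subseteq \omega \text{ computable}\}$. For a many-one degree $\mathbf{a}$ (an equivalence class of subsets of $\omega$ under mutual many-one reducibility $\leq_m$), its coarse computability bound is $\Gamma_m(\mathbf{a}) := \inf\{\gamma(A) \mid A \leq_m \mathbf{a}\}$, where $A \leq_m \mathbf{a}$ means $A$ is many-one reducible to some (equivalently every) set in $\mathbf{a}$. *)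

theory Defs
  imports Main "HOL-Library.Nat_Bijection" "HOL-Library.Extended_Real" "HOL-Library.Liminf_Limsup"
begin

datatype recf =
    Zero | Succ | Left | Right
  | PairF recf recf
  | Comp recf recf
  | Prec recf recf
  | Rfind recf

inductive ev :: "recf \<Rightarrow> nat \<Rightarrow> nat \<Rightarrow> bool" where
  ev_zero: "ev Zero n 0"
| ev_succ: "ev Succ n (Suc n)"
| ev_left: "ev Left n (fst (prod_decode n))"
| ev_right: "ev Right n (snd (prod_decode n))"
| ev_pair: "ev f n a \<Longrightarrow> ev g n b \<Longrightarrow> ev (PairF f g) n (prod_encode (a, b))"
| ev_comp: "ev g n m \<Longrightarrow> ev f m k \<Longrightarrow> ev (Comp f g) n k"
| ev_prec0: "ev f a k \<Longrightarrow> ev (Prec f g) (prod_encode (a, 0)) k"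
| ev_precS: "ev (Prec f g) (prod_encode (a, y)) i \<Longrightarrow>
             ev g (prod_encode (a, prod_encode (y, i))) k \<Longrightarrow>
             ev (Prec f g) (prod_encode (a, Suc y)) k"
| ev_rfind: "ev f (prod_encode (a, m)) 0 \<Longrightarrow>
             (\<forall>j<m. \<exists>v. v > 0 \<and> ev f (prod_encode (a, j)) v) \<Longrightarrow>
             ev (Rfind f) a m"

definition computable_fun :: "(nat \<Rightarrow> nat) \<Rightarrow> bool" where
  "computable_fun h \<longleftrightarrow> (\<exists>c. \<forall>n. ev c n (h n))"

definition computable_set :: "nat set \<Rightarrow> bool" where
  "computable_set R \<longleftrightarrow> computable_fun (\<lambda>n. if n \<in> R then 1 else 0)"

definition m_reducible :: "nat set \<Rightarrow> nat set \<Rightarrow> bool" (infix "\<le>\<^sub>m" 50) where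
  "A \<le>\<^sub>m B \<longleftrightarrow> (\<exists>f. computable_fun f \<and> (\<forall>x. x \<in> A \<longleftrightarrow> f x \<in> B))"

definition m_degree :: "nat set set \<Rightarrow> bool" where
  "m_degree D \<longleftrightarrow> (\<exists>B. D = {A. A \<le>\<^sub>m B \<and> B \<le>\<^sub>m A})"

definition lower_density :: "nat set \<Rightarrow> ereal" where
  "lower_density Z = liminf (\<lambda>n. ereal (real (card (Z \<inter> {..<n})) / real n))"

definition agree :: "nat set \<Rightarrow> nat set \<Rightarrow> nat set" where
  "agree A R = {x. x \<in> A \<longleftrightarrow> x \<in> R}"

definition gamma :: "nat set \<Rightarrow> ereal" where
  "gamma A = Sup {lower_density (agree A R) | R. computable_set R}"

definition Gamma_m :: "nat set set \<Rightarrow> ereal" where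
  "Gamma_m D = Inf {gamma A | A. \<exists>B\<in>D. A \<le>\<^sub>m B}"

end

theory Submission
  imports Defs "HOL-Probability.Hoeffding"
begin

text \<open>
  Let \<open>T\<close> be a diagonal set that on the block \<open>[k!, (k+1)!)\<close> copies the \<open>i\<close>-th computable set,
  \<open>k = \<langle>i, j\<rangle>\<close>, so that every computable set is copied on infinitely many blocks, and let \<open>B\<close>
  agree with \<open>T\<close> exactly on a random set \<open>W\<close> containing each point independently with
  probability \<open>p\<close>. On a block copying \<open>R\<close>, \<open>B\<close> agrees with \<open>R\<close> exactly on \<open>W\<close>, i.e. on about a
  \<open>p\<close>-fraction of the block; as each block dominates the initial segment it ends, the lower
  density of the agreement of \<open>B\<close> and \<open>R\<close> is at most \<open>p\<close>, so \<open>\<gamma>(B) \<le> p\<close>. Conversely, if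
  \<open>A = f -` B\<close> with \<open>f\<close> computable, guess \<open>x \<in> A\<close> iff an odd number of earlier points have the
  same \<open>f\<close>-value. On each fibre of \<open>f\<close> this guess is right on half of the points, except that
  on a fibre of odd size the last point is right iff the value avoids \<open>B\<close>. Each value avoids
  \<open>B\<close> with probability at least \<open>min p (1 - p) = p\<close>, so by Hoeffding's inequality and
  Borel-Cantelli, almost surely (for the countably many computable \<open>f\<close> at once) the guess is
  right on a fraction \<open>\<ge> p - o(1)\<close> of every initial segment.
\<close>

section \<open>Computable functions\<close>

inductive_cases ev_ZeroE: "ev Zero n k"
inductive_cases ev_SuccE: "ev Succ n k"
inductive_cases ev_LeftE: "ev Left n k"
inductive_cases ev_RightE: "ev Right n k"
inductive_cases ev_PairFE: "ev (PairF f g) n k"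
inductive_cases ev_CompE: "ev (Comp f g) n k"
inductive_cases ev_PrecE: "ev (Prec f g) n k"
inductive_cases ev_RfindE: "ev (Rfind f) n k"

lemma ev_deterministic: "ev c n a \<Longrightarrow> ev c n b \<Longrightarrow> a = b"
proof (induction arbitrary: b rule: ev.induct)
  case (ev_prec0 f a k g)
  from ev_prec0.prems show ?case
    by (rule ev_PrecE) (auto simp: ev_prec0.IH)
next
  case (ev_precS f g a y i k)
  from ev_precS.prems show ?case
    by (rule ev_PrecE) (auto dest: ev_precS.IH(1) ev_precS.IH(2))
next
  case (ev_rfind f a m)
  from ev_rfind.prems obtain m' where m': "ev f (prod_encode (a, m')) 0"
    and below: "\<forall>j<m'. \<exists>v>0. ev f (prod_encode (a, j)) v" and "b = m'"
    by (rule ev_RfindE) blast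
  have "\<not> m < m'" using below ev_rfind.IH(1) by fastforce
  moreover have "\<not> m' < m" using m' ev_rfind.IH(2) by fastforce
  ultimately show ?case using \<open>b = m'\<close> by simp
next
  case (ev_pair f n a g b')
  from ev_pair.prems show ?case by (rule ev_PairFE) (simp add: ev_pair.IH)
next
  case (ev_comp g n m f k)
  from ev_comp.prems show ?case by (rule ev_CompE) (blast dest: ev_comp.IH)
qed (auto elim: ev_ZeroE ev_SuccE ev_LeftE ev_RightE)

lemma computable_fun_zero: "computable_fun (\<lambda>_. 0)"
  unfolding computable_fun_def using ev_zero by blast

lemma computable_fun_Suc: "computable_fun Suc"
  unfolding computable_fun_def using ev_succ by blast

lemma computable_fun_fst: "computable_fun (\<lambda>n. fst (prod_decode n))"
  unfolding computable_fun_def using ev_left by blast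

lemma computable_fun_snd: "computable_fun (\<lambda>n. snd (prod_decode n))"
  unfolding computable_fun_def using ev_right by blast

lemma computable_fun_pair:
  "computable_fun f \<Longrightarrow> computable_fun g \<Longrightarrow> computable_fun (\<lambda>n. prod_encode (f n, g n))"
  unfolding computable_fun_def by (blast intro: ev_pair)

lemma computable_fun_comp:
  "computable_fun f \<Longrightarrow> computable_fun g \<Longrightarrow> computable_fun (\<lambda>n. g (f n))"
  unfolding computable_fun_def by (blast intro: ev_comp)

lemma computable_fun_id: "computable_fun (\<lambda>n. n)"
  using computable_fun_pair[OF computable_fun_fst computable_fun_snd] by simp

lemma computable_fun_const: "computable_fun (\<lambda>_. c)"
  by (induction c) (auto intro: computable_fun_zero computable_fun_comp[OF _ computable_fun_Suc])

definition computable_fun2 :: "(nat \<Rightarrow> nat \<Rightarrow> nat) \<Rightarrow> bool" where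
  "computable_fun2 h \<longleftrightarrow> computable_fun (\<lambda>n. h (fst (prod_decode n)) (snd (prod_decode n)))"

lemma computable_fun2_apply:
  assumes "computable_fun2 h" and "computable_fun f" and "computable_fun g"
  shows "computable_fun (\<lambda>n. h (f n) (g n))"
  using computable_fun_comp[OF computable_fun_pair[OF assms(2,3)] assms(1)[unfolded computable_fun2_def]]
  by simp

primrec prim_rec :: "(nat \<Rightarrow> nat) \<Rightarrow> (nat \<Rightarrow> nat \<Rightarrow> nat \<Rightarrow> nat) \<Rightarrow> nat \<Rightarrow> nat \<Rightarrow> nat" where
  "prim_rec f g a 0 = f a"
| "prim_rec f g a (Suc y) = g a y (prim_rec f g a y)"

lemma computable_fun2_prim_rec:
  assumes "computable_fun f"
    and "computable_fun2 (\<lambda>a t. g a (fst (prod_decode t)) (snd (prod_decode t)))"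
  shows "computable_fun2 (prim_rec f g)"
proof -
  obtain cf where cf: "\<And>n. ev cf n (f n)"
    using assms(1) unfolding computable_fun_def by blast
  obtain cg where cg: "\<And>a y i. ev cg (prod_encode (a, prod_encode (y, i))) (g a y i)"
    using assms(2) unfolding computable_fun2_def computable_fun_def
    by (metis fst_conv prod_encode_inverse snd_conv)
  have "ev (Prec cf cg) (prod_encode (a, y)) (prim_rec f g a y)" for a y
    by (induction y) (auto intro: ev_prec0 ev_precS cf cg)
  then have "ev (Prec cf cg) n (prim_rec f g (fst (prod_decode n)) (snd (prod_decode n)))" for n
    by (metis prod.collapse prod_decode_inverse)
  then show ?thesis
    unfolding computable_fun2_def computable_fun_def by blast
qed

lemma computable_fun_pred: "computable_fun (\<lambda>x. x - 1)"
proof -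
  have "computable_fun2 (prim_rec (\<lambda>_. 0) (\<lambda>_ y _. y))"
    by (rule computable_fun2_prim_rec[OF computable_fun_zero], unfold computable_fun2_def)
      (rule computable_fun_comp[OF computable_fun_snd computable_fun_fst])
  then have "computable_fun (\<lambda>x. prim_rec (\<lambda>_. 0) (\<lambda>_ y _. y) 0 x)"
    by (rule computable_fun2_apply[OF _ computable_fun_zero computable_fun_id])
  moreover have "prim_rec (\<lambda>_. 0) (\<lambda>_ y _. y) 0 x = x - 1" for x
    by (cases x) simp_all
  ultimately show ?thesis by simp
qed

lemma computable_fun2_minus: "computable_fun2 (\<lambda>u v. u - v)"
proof -
  have "computable_fun2 (prim_rec (\<lambda>u. u) (\<lambda>_ _ i. i - 1))"
    by (rule computable_fun2_prim_rec[OF computable_fun_id], unfold computable_fun2_def)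
      (rule computable_fun_comp[OF computable_fun_comp[OF computable_fun_snd computable_fun_snd]
            computable_fun_pred])
  moreover have "prim_rec (\<lambda>u. u) (\<lambda>_ _ i. i - 1) u v = u - v" for u v
    by (induction v) simp_all
  ultimately show ?thesis by (simp add: computable_fun2_def)
qed

lemma computable_fun2_plus: "computable_fun2 (\<lambda>u v. u + v)"
proof -
  have "computable_fun2 (prim_rec (\<lambda>u. u) (\<lambda>_ _ i. Suc i))"
    by (rule computable_fun2_prim_rec[OF computable_fun_id], unfold computable_fun2_def)
      (rule computable_fun_comp[OF computable_fun_comp[OF computable_fun_snd computable_fun_snd]
            computable_fun_Suc])
  moreover have "prim_rec (\<lambda>u. u) (\<lambda>_ _ i. Suc i) u v = u + v" for u v
    by (induction v) simp_all
  ultimately show ?thesis by (simp add: computable_fun2_def)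
qed

lemma computable_fun_dist:
  "computable_fun f \<Longrightarrow> computable_fun g \<Longrightarrow> computable_fun (\<lambda>n. (f n - g n) + (g n - f n))"
  by (intro computable_fun2_apply[OF computable_fun2_plus] computable_fun2_apply[OF computable_fun2_minus])

lemma computable_fun_eq_indicator:
  assumes "computable_fun f" and "computable_fun g"
  shows "computable_fun (\<lambda>n. if f n = g n then 1 else 0)"
proof -
  have "(if f n = g n then 1 else 0) = 1 - ((f n - g n) + (g n - f n))" for n
    by simp
  then show ?thesis
    using computable_fun2_apply[OF computable_fun2_minus computable_fun_const computable_fun_dist[OF assms]]
    by presburger
qed

instance recf :: countable
  by countable_datatype

lemma countable_computable_fun: "countable {f. computable_fun f}"
proof -
  have "{f. computable_fun f} \<subseteq> range (\<lambda>c n. THE k. ev c n k)"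
  proof
    fix f assume "f \<in> {f. computable_fun f}"
    then obtain c where c: "\<And>n. ev c n (f n)"
      by (auto simp: computable_fun_def)
    have "(\<lambda>n. THE k. ev c n k) = f"
      by (rule ext, rule the_equality, rule c, rule ev_deterministic[OF _ c])
    then show "f \<in> range (\<lambda>c n. THE k. ev c n k)" by blast
  qed
  then show ?thesis
    by (rule countable_subset) simp
qed

lemma countable_computable_set: "countable {R. computable_set R}"
proof -
  have "{R. computable_set R} \<subseteq> (\<lambda>h. {n. h n = 1}) ` {f. computable_fun f}"
  proof
    fix R assume "R \<in> {R. computable_set R}"
    then show "R \<in> (\<lambda>h. {n. h n = 1}) ` {f. computable_fun f}"
      unfolding computable_set_def
      by (intro image_eqI[of R _ "\<lambda>n. if n \<in> R then 1 else 0"]) simp_all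
  qed
  then show ?thesis
    using countable_computable_fun by (blast intro: countable_subset)
qed

lemma computable_set_empty: "computable_set {}"
  by (simp add: computable_set_def computable_fun_zero)

lemma m_reducible_refl: "A \<le>\<^sub>m A"
  unfolding m_reducible_def using computable_fun_id by blast

lemma m_reducible_trans: "A \<le>\<^sub>m B \<Longrightarrow> B \<le>\<^sub>m C \<Longrightarrow> A \<le>\<^sub>m C"
  unfolding m_reducible_def by (blast intro: computable_fun_comp)

section \<open>Fibres of odd size\<close>

lemma card_Int_lessThan_Suc:
  "card (Z \<inter> {..<Suc n}) = card (Z \<inter> {..<n}) + (if n \<in> Z then 1 else 0)"
proof -
  have "Z \<inter> {..<Suc n} = (if n \<in> Z then insert n (Z \<inter> {..<n}) else Z \<inter> {..<n})"
    by (auto simp: lessThan_Suc)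
  then show ?thesis by simp
qed

definition count_below :: "(nat \<Rightarrow> nat) \<Rightarrow> nat \<Rightarrow> nat \<Rightarrow> nat" where
  "count_below f v n = card (f -` {v} \<inter> {..<n})"

lemma count_below_0 [simp]: "count_below f v 0 = 0"
  by (simp add: count_below_def)

lemma count_below_Suc [simp]:
  "count_below f v (Suc n) = count_below f v n + (if f n = v then 1 else 0)"
  by (simp add: count_below_def card_Int_lessThan_Suc)

definition odd_rank_set :: "(nat \<Rightarrow> nat) \<Rightarrow> nat set" where
  "odd_rank_set f = {x. odd (count_below f (f x) x)}"

lemma computable_set_odd_rank_set:
  assumes f: "computable_fun f"
  shows "computable_set (odd_rank_set f)"
proof -
  \<comment> \<open>On bits, \<open>(h - e) + (e - h)\<close> is \<open>h xor e\<close>.\<close>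
  define parity where "parity = prim_rec (\<lambda>_. 0)
    (\<lambda>a y h. (h - (if f y = f a then 1 else 0)) + ((if f y = f a then 1 else 0) - h))"
  have parity: "parity a y = (if odd (count_below f (f a) y) then 1 else 0)" for a y
    by (induction y) (simp_all add: parity_def)
  have "computable_fun2 parity"
    unfolding parity_def
  proof (rule computable_fun2_prim_rec[OF computable_fun_zero], unfold computable_fun2_def)
    have y: "computable_fun (\<lambda>n. fst (prod_decode (snd (prod_decode n))))"
      and h: "computable_fun (\<lambda>n. snd (prod_decode (snd (prod_decode n))))"
      by (rule computable_fun_comp[OF computable_fun_snd]; rule computable_fun_fst computable_fun_snd)+
    have e: "computable_fun (\<lambda>n.
        if f (fst (prod_decode (snd (prod_decode n)))) = f (fst (prod_decode n)) then 1 else 0)"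
      by (rule computable_fun_eq_indicator[OF computable_fun_comp[OF y f]
            computable_fun_comp[OF computable_fun_fst f]])
    show "computable_fun (\<lambda>n.
      (snd (prod_decode (snd (prod_decode n)))
        - (if f (fst (prod_decode (snd (prod_decode n)))) = f (fst (prod_decode n)) then 1 else 0))
      + ((if f (fst (prod_decode (snd (prod_decode n)))) = f (fst (prod_decode n)) then 1 else 0)
        - snd (prod_decode (snd (prod_decode n)))))"
      by (rule computable_fun_dist[OF h e])
  qed
  then have "computable_fun (\<lambda>x. parity x x)"
    by (rule computable_fun2_apply[OF _ computable_fun_id computable_fun_id])
  moreover have "(\<lambda>x. parity x x) = (\<lambda>x. if x \<in> odd_rank_set f then 1 else 0)"
    by (simp add: fun_eq_iff parity odd_rank_set_def)
  ultimately show ?thesis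
    unfolding computable_set_def by simp
qed

definition odd_fibres :: "(nat \<Rightarrow> nat) \<Rightarrow> nat \<Rightarrow> nat set" where
  "odd_fibres f n = {v. odd (count_below f v n)}"

lemma odd_fibres_subset_image: "odd_fibres f n \<subseteq> f ` {..<n}"
proof
  fix v assume "v \<in> odd_fibres f n"
  then have "f -` {v} \<inter> {..<n} \<noteq> {}"
    by (auto simp: odd_fibres_def count_below_def)
  then show "v \<in> f ` {..<n}" by blast
qed

lemma finite_odd_fibres [simp]: "finite (odd_fibres f n)"
  by (rule finite_subset[OF odd_fibres_subset_image]) simp

lemma card_odd_fibres_le: "card (odd_fibres f n) \<le> n"
  using card_mono[OF finite_imageI[OF finite_lessThan] odd_fibres_subset_image[of f n]]
    card_image_le[of "{..<n}" f]
  by simp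

lemma odd_fibres_Suc:
  "odd_fibres f (Suc n) =
    (if n \<in> odd_rank_set f then odd_fibres f n - {f n} else insert (f n) (odd_fibres f n))"
  by (auto simp: odd_fibres_def odd_rank_set_def)

text \<open>
  On a fibre of size \<open>m\<close> the two sets agree on \<open>\<lfloor>m/2\<rfloor>\<close> or \<open>\<lceil>m/2\<rceil>\<close> points, the latter
  exactly when the fibre's value avoids \<open>B\<close>.
\<close>

lemma agree_odd_rank_set_card:
  "2 * card (agree (f -` B) (odd_rank_set f) \<inter> {..<n}) + card (odd_fibres f n)
    = n + 2 * card (odd_fibres f n - B)"
proof (induction n)
  case (Suc n)
  let ?O = "odd_fibres f n" and ?O' = "odd_fibres f (Suc n)"
  have agree_Suc: "card (agree (f -` B) (odd_rank_set f) \<inter> {..<Suc n})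
      = card (agree (f -` B) (odd_rank_set f) \<inter> {..<n})
        + (if f n \<in> B \<longleftrightarrow> n \<in> odd_rank_set f then 1 else 0)"
    by (simp add: card_Int_lessThan_Suc agree_def)
  have in_O: "f n \<in> ?O \<longleftrightarrow> n \<in> odd_rank_set f"
    by (simp add: odd_fibres_def odd_rank_set_def)
  show ?case
  proof (cases "n \<in> odd_rank_set f")
    case True
    then have O': "?O' = ?O - {f n}" and v: "f n \<in> ?O"
      by (simp_all add: odd_fibres_Suc in_O)
    have "card ?O = Suc (card ?O')"
      unfolding O' by (rule card_Suc_Diff1[symmetric, OF finite_odd_fibres v])
    moreover have "card (?O - B) = card (?O' - B) + (if f n \<in> B then 0 else 1)"
    proof -
      have "?O' - B = (?O - B) - {f n}"
        unfolding O' by blast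
      then show ?thesis
        using v card_Suc_Diff1[of "?O - B" "f n"] by auto
    qed
    ultimately show ?thesis using Suc.IH agree_Suc True by (cases "f n \<in> B") auto
  next
    case False
    then have O': "?O' = insert (f n) ?O" and v: "f n \<notin> ?O"
      by (simp_all add: odd_fibres_Suc in_O)
    have "card ?O' = Suc (card ?O)"
      unfolding O' using v by simp
    moreover have "card (?O' - B) = card (?O - B) + (if f n \<in> B then 0 else 1)"
      unfolding O' using v by (simp add: insert_Diff_if)
    ultimately show ?thesis using Suc.IH agree_Suc False by (cases "f n \<in> B") auto
  qed
qed (simp add: odd_fibres_def)

section \<open>Lower densities\<close>

lemma lower_density_geI:
  fixes p :: real
  assumes "\<And>\<epsilon>. \<epsilon> > 0 \<Longrightarrow> eventually (\<lambda>n. (p - \<epsilon>) * n \<le> card (Z \<inter> {..<n})) sequentially"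
  shows "ereal p \<le> lower_density Z"
  unfolding lower_density_def le_Liminf_iff
proof (intro allI impI)
  fix y assume "y < ereal p"
  then obtain r where r: "y < ereal r" "r < p"
    using ereal_dense2 by fastforce
  have "eventually (\<lambda>n. (p - (p - r)) * n \<le> card (Z \<inter> {..<n}) \<and> n > 0) sequentially"
    using assms[of "p - r"] r(2) eventually_gt_at_top[of 0] by (auto intro: eventually_conj)
  then show "eventually (\<lambda>n. y < ereal (card (Z \<inter> {..<n}) / n)) sequentially"
  proof (rule eventually_mono)
    fix n assume "(p - (p - r)) * n \<le> card (Z \<inter> {..<n}) \<and> n > 0"
    then have "r \<le> card (Z \<inter> {..<n}) / n"
      by (simp add: pos_le_divide_eq)
    then show "y < ereal (card (Z \<inter> {..<n}) / n)"
      using r(1) by (simp add: less_le_trans)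
  qed
qed

lemma lower_density_leI:
  fixes p :: real
  assumes "\<And>\<epsilon>. \<epsilon> > 0 \<Longrightarrow> frequently (\<lambda>n. card (Z \<inter> {..<n}) \<le> (p + \<epsilon>) * n) sequentially"
  shows "lower_density Z \<le> ereal p"
proof (rule ccontr)
  assume "\<not> lower_density Z \<le> ereal p"
  then obtain r where r: "p < r" "ereal r < lower_density Z"
    using ereal_dense2 by (fastforce simp: not_le)
  then have "eventually (\<lambda>n. r < card (Z \<inter> {..<n}) / n \<and> n > 0) sequentially"
    using less_LiminfD[OF r(2)[unfolded lower_density_def]] eventually_gt_at_top[of 0]
    by (auto intro: eventually_conj)
  moreover have "frequently (\<lambda>n. card (Z \<inter> {..<n}) \<le> (p + (r - p)) * n) sequentially"
    using assms[of "r - p"] r(1) by simp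
  ultimately have "frequently (\<lambda>n. (r < card (Z \<inter> {..<n}) / n \<and> n > 0)
      \<and> card (Z \<inter> {..<n}) \<le> (p + (r - p)) * n) sequentially"
    by (rule frequently_eventually_conj[rotated])
  then show False
    by (auto dest!: frequently_ex simp: less_divide_eq)
qed

lemma gamma_ge_odd_rank:
  fixes p :: real
  assumes p: "p \<le> 1/2" and f: "computable_fun f"
    and typical: "\<And>\<epsilon>. \<epsilon> > 0 \<Longrightarrow>
      eventually (\<lambda>n. p * card (odd_fibres f n) - \<epsilon> * real n \<le> card (odd_fibres f n - B))
        sequentially"
  shows "ereal p \<le> gamma (f -` B)"
proof -
  have "ereal p \<le> lower_density (agree (f -` B) (odd_rank_set f))"
  proof (rule lower_density_geI)
    fix \<epsilon> :: real assume "\<epsilon> > 0"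
    from typical[OF this] show "eventually (\<lambda>n. (p - \<epsilon>) * n
        \<le> card (agree (f -` B) (odd_rank_set f) \<inter> {..<n})) sequentially"
    proof (rule eventually_mono)
      fix n
      assume "p * card (odd_fibres f n) - \<epsilon> * real n \<le> card (odd_fibres f n - B)"
      moreover have "2 * real (card (agree (f -` B) (odd_rank_set f) \<inter> {..<n}))
          + card (odd_fibres f n) = n + 2 * real (card (odd_fibres f n - B))"
        using agree_odd_rank_set_card[of f B n] by (simp flip: of_nat_add of_nat_mult)
      moreover have "(1 - 2 * p) * card (odd_fibres f n) \<le> (1 - 2 * p) * n"
        using p card_odd_fibres_le[of f n] by (intro mult_left_mono) auto
      ultimately show "(p - \<epsilon>) * n \<le> card (agree (f -` B) (odd_rank_set f) \<inter> {..<n})"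
        by (simp add: algebra_simps)
    qed
  qed
  also have "\<dots> \<le> gamma (f -` B)"
    unfolding gamma_def using computable_set_odd_rank_set[OF f] by (blast intro: Sup_upper)
  finally show ?thesis .
qed

lemma Gamma_m_degree_eq:
  assumes "gamma B \<le> c" and "\<And>A. A \<le>\<^sub>m B \<Longrightarrow> c \<le> gamma A"
  shows "Gamma_m {A. A \<le>\<^sub>m B \<and> B \<le>\<^sub>m A} = c"
  unfolding Gamma_m_def
proof (rule antisym)
  show "Inf {gamma A |A. \<exists>B'\<in>{A. A \<le>\<^sub>m B \<and> B \<le>\<^sub>m A}. A \<le>\<^sub>m B'} \<le> c"
    using assms(1) m_reducible_refl by (blast intro: Inf_lower2)
  show "c \<le> Inf {gamma A |A. \<exists>B'\<in>{A. A \<le>\<^sub>m B \<and> B \<le>\<^sub>m A}. A \<le>\<^sub>m B'}"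
    using assms(2) m_reducible_trans by (blast intro: Inf_greatest)
qed

section \<open>Factorial blocks and diagonalisation\<close>

definition factorial_block :: "nat \<Rightarrow> nat set" where
  "factorial_block k = {fact k..<fact (Suc k)}"

lemma factorial_block_unique:
  assumes "y \<in> factorial_block k" and "y \<in> factorial_block k'"
  shows "k = k'"
proof (rule ccontr)
  assume "k \<noteq> k'"
  then have "Suc k \<le> k' \<or> Suc k' \<le> k" by auto
  then show False
    using assms fact_mono[of "Suc k" k', where 'a=nat] fact_mono[of "Suc k'" k, where 'a=nat]
    by (auto simp: factorial_block_def)
qed

lemma finite_factorial_block [simp]: "finite (factorial_block k)"
  by (simp add: factorial_block_def)

lemma le_card_factorial_block: "k \<le> card (factorial_block k)"
proof -
  have "k * 1 \<le> k * fact k"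
    by (rule mult_le_mono2) (rule fact_ge_1)
  then show ?thesis
    by (simp add: factorial_block_def algebra_simps)
qed

lemma card_Int_lessThan_fact_Suc_le:
  fixes c :: real
  assumes "0 \<le> c" and "card (Z \<inter> factorial_block k) \<le> c * card (factorial_block k)"
  shows "card (Z \<inter> {..<fact (Suc k)}) \<le> (1 / Suc k + c) * fact (Suc k)"
proof -
  have "card (Z \<inter> {..<fact (Suc k)}) \<le> card ({..<fact k} \<union> (Z \<inter> factorial_block k))"
    by (rule card_mono) (auto simp: factorial_block_def)
  also have "\<dots> \<le> fact k + card (Z \<inter> factorial_block k)"
    using card_Un_le[of "{..<fact k}" "Z \<inter> factorial_block k"] by simp
  finally have "card (Z \<inter> {..<fact (Suc k)}) \<le> real (fact k) + card (Z \<inter> factorial_block k)"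
    by linarith
  moreover have "real (fact k) = 1 / Suc k * fact (Suc k)"
    by (simp add: field_simps)
  moreover have "c * card (factorial_block k) \<le> c * fact (Suc k)"
    using \<open>0 \<le> c\<close> by (intro mult_left_mono) (simp_all add: factorial_block_def)
  ultimately show ?thesis
    using assms(2) by (simp add: algebra_simps)
qed

lemma lower_density_le_factorial_blocks:
  fixes p :: real
  assumes "0 \<le> p"
    and blocks: "\<And>\<epsilon>. \<epsilon> > 0 \<Longrightarrow>
      frequently (\<lambda>k. card (Z \<inter> factorial_block k) \<le> (p + \<epsilon>) * card (factorial_block k)) sequentially"
  shows "lower_density Z \<le> ereal p"
proof (rule lower_density_leI)
  fix \<epsilon> :: real assume "\<epsilon> > 0"
  obtain K :: nat where K: "2 / \<epsilon> < K"
    using reals_Archimedean2 by blast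
  have "frequently (\<lambda>k. card (Z \<inter> factorial_block k) \<le> (p + \<epsilon> / 2) * card (factorial_block k)
      \<and> K \<le> k) sequentially"
    using blocks[of "\<epsilon> / 2"] \<open>\<epsilon> > 0\<close> eventually_ge_at_top[of K]
    by (auto intro: frequently_eventually_frequently)
  then have freq: "\<forall>N. \<exists>k\<ge>N. K \<le> k
      \<and> card (Z \<inter> factorial_block k) \<le> (p + \<epsilon> / 2) * card (factorial_block k)"
    unfolding frequently_sequentially by blast
  show "frequently (\<lambda>n. card (Z \<inter> {..<n}) \<le> (p + \<epsilon>) * n) sequentially"
    unfolding frequently_sequentially
  proof
    fix N
    obtain k where k: "N \<le> k" "K \<le> k"
      and Zk: "card (Z \<inter> factorial_block k) \<le> (p + \<epsilon> / 2) * card (factorial_block k)"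
      using freq by blast
    have "real K < Suc k"
      using k(2) by simp
    with K have "2 / \<epsilon> < Suc k"
      by linarith
    then have "1 / Suc k \<le> \<epsilon> / 2"
      using \<open>\<epsilon> > 0\<close> by (simp add: field_simps)
    then have "card (Z \<inter> {..<fact (Suc k)}) \<le> (p + \<epsilon>) * fact (Suc k)"
      using card_Int_lessThan_fact_Suc_le[OF _ Zk] \<open>0 \<le> p\<close> \<open>\<epsilon> > 0\<close>
        mult_right_mono[of "1 / Suc k" "\<epsilon> / 2" "fact (Suc k)"]
      by (simp add: algebra_simps)
    moreover have "N \<le> fact (Suc k)"
      using k(1) fact_ge_self[of "Suc k"] by linarith
    ultimately show "\<exists>n\<ge>N. card (Z \<inter> {..<n}) \<le> (p + \<epsilon>) * n"
      by (metis of_nat_fact)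
  qed
qed

lemma gamma_le_factorial_blocks:
  fixes p :: real
  assumes "0 \<le> p"
    and W: "\<And>\<epsilon>. \<epsilon> > 0 \<Longrightarrow>
      eventually (\<lambda>k. card (W \<inter> factorial_block k) \<le> (p + \<epsilon>) * card (factorial_block k)) sequentially"
    and agree_in_W: "\<And>R. computable_set R \<Longrightarrow>
      frequently (\<lambda>k. agree B R \<inter> factorial_block k \<subseteq> W) sequentially"
  shows "gamma B \<le> ereal p"
  unfolding gamma_def
proof (rule Sup_least, clarify)
  fix R assume R: "computable_set R"
  show "lower_density (agree B R) \<le> ereal p"
  proof (rule lower_density_le_factorial_blocks[OF \<open>0 \<le> p\<close>])
    fix \<epsilon> :: real assume "\<epsilon> > 0"
    from frequently_eventually_frequently[OF agree_in_W[OF R] W[OF this]]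
    show "frequently (\<lambda>k. card (agree B R \<inter> factorial_block k)
        \<le> (p + \<epsilon>) * card (factorial_block k)) sequentially"
    proof (rule frequently_elim1, elim conjE)
      fix k assume "agree B R \<inter> factorial_block k \<subseteq> W"
        and "card (W \<inter> factorial_block k) \<le> (p + \<epsilon>) * card (factorial_block k)"
      moreover have "card (agree B R \<inter> factorial_block k) \<le> card (W \<inter> factorial_block k)"
        using \<open>agree B R \<inter> factorial_block k \<subseteq> W\<close>
        by (intro card_mono) (auto simp: factorial_block_def)
      ultimately show "card (agree B R \<inter> factorial_block k) \<le> (p + \<epsilon>) * card (factorial_block k)"
        by linarith
    qed
  qed
qed

definition diagonal_set :: "(nat \<Rightarrow> nat set) \<Rightarrow> nat set" where
  "diagonal_set E = (\<Union>k. E (fst (prod_decode k)) \<inter> factorial_block k)"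

lemma frequently_diagonal_set_eq:
  "frequently (\<lambda>k. diagonal_set E \<inter> factorial_block k = E i \<inter> factorial_block k) sequentially"
  unfolding frequently_sequentially
proof
  fix N
  have "diagonal_set E \<inter> factorial_block k = E (fst (prod_decode k)) \<inter> factorial_block k" for k
    using factorial_block_unique by (auto simp: diagonal_set_def)
  then show "\<exists>k\<ge>N. diagonal_set E \<inter> factorial_block k = E i \<inter> factorial_block k"
    using le_prod_encode_2[of N i] by (intro exI[of _ "prod_encode (i, N)"]) simp
qed

section \<open>Random perturbations\<close>

lemma (in prob_space) AE_ex: "AE \<omega> in M. P \<omega> \<Longrightarrow> \<exists>\<omega>. P \<omega>"
  using AE_contr[of P] by auto

locale bernoulli_sequence =
  fixes p :: real
  assumes p_nonneg: "0 \<le> p" and p_le_1: "p \<le> 1"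
begin

definition coin :: "bool measure" where
  "coin = measure_pmf (bernoulli_pmf p)"

definition M :: "(nat \<Rightarrow> bool) measure" where
  "M = PiM UNIV (\<lambda>_. coin)"

lemma prob_space_coin: "prob_space coin"
  unfolding coin_def by (rule prob_space_measure_pmf)

sublocale prob_space M
  unfolding M_def by (rule prob_space_PiM[OF prob_space_coin])

lemma space_M [simp]: "space M = UNIV"
  by (simp add: M_def space_PiM coin_def)

lemma measurable_coordinate [measurable]: "(\<lambda>\<omega>. \<omega> i) \<in> measurable M coin"
  unfolding M_def by measurable

lemma indep_coordinates: "indep_vars (\<lambda>_. coin) (\<lambda>i \<omega>. \<omega> i) UNIV"
proof -
  have "distr M (\<Pi>\<^sub>M i\<in>UNIV. coin) (\<lambda>\<omega>. \<lambda>i\<in>UNIV. \<omega> i) = M"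
    by (simp add: M_def restrict_UNIV)
  also have "\<dots> = (\<Pi>\<^sub>M i\<in>UNIV. distr M coin (\<lambda>\<omega>. \<omega> i))"
    unfolding M_def by (simp add: distr_PiM_component[OF prob_space_coin])
  finally show ?thesis
    by (subst indep_vars_iff_distr_eq_PiM) auto
qed

lemma prob_coordinate_eq: "prob {\<omega>. \<omega> y = b} = (if b then p else 1 - p)"
proof -
  have "prob {\<omega>. \<omega> y = b} = measure (distr M coin (\<lambda>\<omega>. \<omega> y)) {b}"
    by (subst measure_distr[OF measurable_coordinate])
      (auto simp: coin_def intro!: arg_cong[where f="measure M"])
  also have "\<dots> = measure coin {b}"
    unfolding M_def by (simp add: distr_PiM_component[OF prob_space_coin])
  also have "\<dots> = (if b then p else 1 - p)"
    using p_nonneg p_le_1 by (simp add: coin_def measure_pmf_single)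
  finally show ?thesis .
qed

definition expected_matches :: "(nat \<Rightarrow> bool) \<Rightarrow> nat set \<Rightarrow> real" where
  "expected_matches s J = (\<Sum>y\<in>J. if s y then p else 1 - p)"

lemma sets_coordinate_eq [measurable]: "{\<omega>. \<omega> y = b} \<in> sets M"
proof -
  have "(\<lambda>\<omega>. \<omega> y) -` {b} \<inter> space M \<in> sets M"
    by (rule measurable_sets[OF measurable_coordinate]) (simp add: coin_def)
  then show ?thesis by (simp add: vimage_def)
qed

lemma card_matches_eq_sum:
  "finite J \<Longrightarrow> real (card {y\<in>J. \<omega> y = s y}) = (\<Sum>y\<in>J. indicator {\<omega>. \<omega> y = s y} \<omega>)"
  by (simp add: indicator_def sum.If_cases Int_def)

lemma prob_count_matches_deviation:
  assumes "finite J" and "J \<noteq> {}" and "\<delta> \<ge> 0"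
  shows "prob {\<omega>. \<delta> \<le> \<bar>card {y\<in>J. \<omega> y = s y} - expected_matches s J\<bar>}
    \<le> 2 * exp (-2 * \<delta>\<^sup>2 / card J)"
proof -
  interpret Hoeffding_ineq M J "\<lambda>y. indicator {\<omega>. \<omega> y = s y}" "\<lambda>_. 0" "\<lambda>_. 1"
    "expected_matches s J"
  proof unfold_locales
    show "finite J" by fact
    have "(\<lambda>y. indicator {\<omega>. \<omega> y = s y} :: _ \<Rightarrow> real) = (\<lambda>y \<omega>. (\<lambda>b. if b = s y then 1 else 0 :: real) (\<omega> y))"
      by (auto simp: fun_eq_iff indicator_def)
    moreover have "indep_vars (\<lambda>_. borel) (\<lambda>y \<omega>. (\<lambda>b. if b = s y then 1 else 0 :: real) (\<omega> y)) UNIV"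
      by (rule indep_vars_compose2[OF indep_coordinates]) (simp add: coin_def)
    ultimately have "indep_vars (\<lambda>_. borel) (\<lambda>y. indicator {\<omega>. \<omega> y = s y} :: _ \<Rightarrow> real) UNIV"
      by (simp only:)
    then show "indep_vars (\<lambda>_. borel) (\<lambda>y. indicator {\<omega>. \<omega> y = s y} :: _ \<Rightarrow> real) J"
      by (rule indep_vars_subset) simp
    show "AE \<omega> in M. indicator {\<omega>. \<omega> y = s y} \<omega> \<in> {0..1::real}" for y
      by (simp add: indicator_def)
    show "expected_matches s J \<equiv> \<Sum>y\<in>J. expectation (indicator {\<omega>. \<omega> y = s y})"
      by (simp add: expected_matches_def emeasure_eq_measure prob_coordinate_eq)
  qed
  show ?thesis
    using Hoeffding_ineq_abs_ge[OF \<open>\<delta> \<ge> 0\<close>] assms(1,2)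
    by (simp add: card_matches_eq_sum card_gt_0_iff)
qed

lemma borel_measurable_card_matches [measurable]:
  "finite J \<Longrightarrow> (\<lambda>\<omega>. real (card {y\<in>J. \<omega> y = s y})) \<in> borel_measurable M"
  by (simp add: card_matches_eq_sum)

lemma prob_count_matches_far_le:
  fixes w :: real
  assumes "finite J" and "card J \<le> w" and "real n \<le> w" and "\<epsilon> > 0"
  shows "prob {\<omega>. \<epsilon> * w \<le> \<bar>card {y\<in>J. \<omega> y = s y} - expected_matches s J\<bar>}
    \<le> 2 * exp (- 2 * \<epsilon>\<^sup>2) ^ n"
proof (cases "J = {}")
  case True
  then have "{\<omega>. \<epsilon> * w \<le> \<bar>card {y\<in>J. \<omega> y = s y} - expected_matches s J\<bar>} = {}" if "n > 0"
    using that assms(3,4) by (auto simp: expected_matches_def not_le intro: mult_pos_pos)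
  moreover have "prob {\<omega>. \<epsilon> * w \<le> \<bar>card {y\<in>J. \<omega> y = s y} - expected_matches s J\<bar>} \<le> 2"
    using prob_le_1 by (rule order_trans) simp
  ultimately show ?thesis
    by (cases "n = 0") simp_all
next
  case False
  have card_pos: "0 < card J"
    using False \<open>finite J\<close> by (simp add: card_gt_0_iff)
  have "prob {\<omega>. \<epsilon> * w \<le> \<bar>card {y\<in>J. \<omega> y = s y} - expected_matches s J\<bar>}
      \<le> 2 * exp (-2 * (\<epsilon> * w)\<^sup>2 / card J)"
    by (rule prob_count_matches_deviation[OF \<open>finite J\<close> False])
      (use assms card_pos in auto)
  also have "\<dots> \<le> 2 * exp (- 2 * \<epsilon>\<^sup>2 * n)"
  proof -
    have "\<epsilon>\<^sup>2 * n * card J \<le> \<epsilon>\<^sup>2 * w * w"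
      using assms(2,3) by (intro mult_mono mult_left_mono) auto
    then show ?thesis
      using card_pos by (simp add: field_simps power2_eq_square)
  qed
  also have "\<dots> = 2 * exp (- 2 * \<epsilon>\<^sup>2) ^ n"
    by (simp add: exp_of_nat_mult[symmetric] mult.commute)
  finally show ?thesis .
qed

lemma AE_eventually_count_matches_close:
  fixes w :: "nat \<Rightarrow> real"
  assumes fin: "\<And>n. finite (J n)" and card_le: "\<And>n. card (J n) \<le> w n"
    and grow: "\<And>n. real n \<le> w n" and "\<epsilon> > 0"
  shows "AE \<omega> in M. eventually (\<lambda>n.
    \<bar>card {y\<in>J n. \<omega> y = s y} - expected_matches s (J n)\<bar> < \<epsilon> * w n) sequentially"
proof -
  define A where "A n = {\<omega>. \<epsilon> * w n
    \<le> \<bar>card {y\<in>J n. \<omega> y = s y} - expected_matches s (J n)\<bar>}" for n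
  have A_sets: "A n \<in> sets M" for n
  proof -
    have "Measurable.pred M (\<lambda>\<omega>. \<epsilon> * w n
        \<le> \<bar>card {y\<in>J n. \<omega> y = s y} - expected_matches s (J n)\<bar>)"
      using fin[of n] by measurable
    then show ?thesis
      by (simp add: A_def pred_def)
  qed
  have "summable (\<lambda>n. 2 * exp (- 2 * \<epsilon>\<^sup>2) ^ n)"
    using \<open>\<epsilon> > 0\<close> by (intro summable_mult summable_geometric) simp
  then have "summable (\<lambda>n. prob (A n))"
    by (rule summable_comparison_test'[where N=0])
      (use prob_count_matches_far_le[OF fin card_le grow \<open>\<epsilon> > 0\<close>] in \<open>auto simp: A_def\<close>)
  then have "AE \<omega> in M. eventually (\<lambda>n. \<omega> \<in> space M - A n) sequentially"
    by (intro borel_cantelli_AE1 A_sets) (simp_all add: emeasure_eq_measure)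
  then show ?thesis
    by (simp add: A_def not_le)
qed

lemma AE_all_eventually_count_matches_close:
  fixes w :: "nat \<Rightarrow> real"
  assumes fin: "\<And>n. finite (J n)" and card_le: "\<And>n. card (J n) \<le> w n"
    and grow: "\<And>n. real n \<le> w n"
  shows "AE \<omega> in M. \<forall>\<epsilon>>0. eventually (\<lambda>n.
    \<bar>card {y\<in>J n. \<omega> y = s y} - expected_matches s (J n)\<bar> < \<epsilon> * w n) sequentially"
proof -
  have "AE \<omega> in M. \<forall>m::nat. eventually (\<lambda>n.
      \<bar>card {y\<in>J n. \<omega> y = s y} - expected_matches s (J n)\<bar> < 1 / Suc m * w n) sequentially"
    unfolding AE_all_countable by (intro allI AE_eventually_count_matches_close fin card_le grow) simp
  then show ?thesis
  proof (rule AE_mp, intro AE_I2 impI allI)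
    fix \<omega> and \<epsilon> :: real
    assume close: "\<forall>m::nat. eventually (\<lambda>n.
      \<bar>card {y\<in>J n. \<omega> y = s y} - expected_matches s (J n)\<bar> < 1 / Suc m * w n) sequentially"
    assume "\<epsilon> > 0"
    then obtain m :: nat where "1 / Suc m < \<epsilon>"
      using nat_approx_posE by blast
    from close[rule_format, of m] show "eventually (\<lambda>n.
      \<bar>card {y\<in>J n. \<omega> y = s y} - expected_matches s (J n)\<bar> < \<epsilon> * w n) sequentially"
    proof (rule eventually_mono)
      fix n
      have "1 / Suc m * w n \<le> \<epsilon> * w n"
        using \<open>1 / Suc m < \<epsilon>\<close> grow[of n] by (intro mult_right_mono) auto
      then show "\<bar>card {y\<in>J n. \<omega> y = s y} - expected_matches s (J n)\<bar> < 1 / Suc m * w n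
          \<Longrightarrow> \<bar>card {y\<in>J n. \<omega> y = s y} - expected_matches s (J n)\<bar> < \<epsilon> * w n"
        by linarith
    qed
  qed
qed

lemma AE_factorial_blocks_typical:
  "AE \<omega> in M. \<forall>\<epsilon>>0. eventually (\<lambda>k.
    card ({y. \<omega> y} \<inter> factorial_block k) \<le> (p + \<epsilon>) * card (factorial_block k)) sequentially"
proof -
  have close: "AE \<omega> in M. \<forall>\<epsilon>>0. eventually (\<lambda>k.
      \<bar>card {y\<in>factorial_block k. \<omega> y = True} - expected_matches (\<lambda>_. True) (factorial_block k)\<bar>
        < \<epsilon> * real (card (factorial_block k))) sequentially"
    by (rule AE_all_eventually_count_matches_close) (simp_all add: le_card_factorial_block)
  show ?thesis
  proof (rule eventually_mono[OF close], intro allI impI, erule allE, erule impE, assumption,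
      erule eventually_mono)
    fix \<omega> k and \<epsilon> :: real
    have "{y. \<omega> y} \<inter> factorial_block k = {y\<in>factorial_block k. \<omega> y = True}"
      by auto
    then show "\<bar>card {y\<in>factorial_block k. \<omega> y = True}
        - expected_matches (\<lambda>_. True) (factorial_block k)\<bar> < \<epsilon> * real (card (factorial_block k))
      \<Longrightarrow> card ({y. \<omega> y} \<inter> factorial_block k) \<le> (p + \<epsilon>) * card (factorial_block k)"
      by (simp add: expected_matches_def abs_less_iff algebra_simps)
  qed
qed

lemma AE_odd_fibres_typical:
  assumes "p \<le> 1/2"
  shows "AE \<omega> in M. \<forall>f\<in>{f. computable_fun f}. \<forall>\<epsilon>>0. eventually (\<lambda>n.
    p * card (odd_fibres f n) - \<epsilon> * real n \<le> card (odd_fibres f n - agree {y. \<omega> y} T)) sequentially"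
proof -
  have close: "AE \<omega> in M. \<forall>f\<in>{f. computable_fun f}. \<forall>\<epsilon>>0. eventually (\<lambda>n.
      \<bar>card {y\<in>odd_fibres f n. \<omega> y = (y \<notin> T)} - expected_matches (\<lambda>y. y \<notin> T) (odd_fibres f n)\<bar>
        < \<epsilon> * real n) sequentially"
    using countable_computable_fun
    by (subst AE_ball_countable)
      (auto intro!: AE_all_eventually_count_matches_close card_odd_fibres_le)
  show ?thesis
  proof (rule eventually_mono[OF close], intro ballI allI impI, drule bspec, assumption,
      erule allE, erule impE, assumption, erule eventually_mono)
    fix \<omega> f n and \<epsilon> :: real
    have eq: "odd_fibres f n - agree {y. \<omega> y} T = {y\<in>odd_fibres f n. \<omega> y = (y \<notin> T)}"
      by (auto simp: agree_def)
    have "p * card (odd_fibres f n) \<le> expected_matches (\<lambda>y. y \<notin> T) (odd_fibres f n)"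
      using sum_bounded_below[of "odd_fibres f n" p "\<lambda>y. if y \<notin> T then p else 1 - p"] assms
      by (simp add: expected_matches_def mult.commute)
    then show "\<bar>card {y\<in>odd_fibres f n. \<omega> y = (y \<notin> T)}
        - expected_matches (\<lambda>y. y \<notin> T) (odd_fibres f n)\<bar> < \<epsilon> * real n
      \<Longrightarrow> p * card (odd_fibres f n) - \<epsilon> * real n \<le> card (odd_fibres f n - agree {y. \<omega> y} T)"
      unfolding eq by (simp add: abs_less_iff)
  qed
qed

end

lemma exists_typical_perturbation:
  fixes p :: real
  assumes "0 \<le> p" and "p \<le> 1/2"
  obtains W where
    "\<And>f \<epsilon>. computable_fun f \<Longrightarrow> \<epsilon> > 0 \<Longrightarrow> eventually (\<lambda>n.
      p * card (odd_fibres f n) - \<epsilon> * real n \<le> card (odd_fibres f n - agree W T)) sequentially"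
    "\<And>\<epsilon>. \<epsilon> > 0 \<Longrightarrow> eventually (\<lambda>k.
      card (W \<inter> factorial_block k) \<le> (p + \<epsilon>) * card (factorial_block k)) sequentially"
proof -
  interpret bernoulli_sequence p
    using assms by unfold_locales auto
  have "\<exists>\<omega>. (\<forall>f\<in>{f. computable_fun f}. \<forall>\<epsilon>>0. eventually (\<lambda>n. p * card (odd_fibres f n)
      - \<epsilon> * real n \<le> card (odd_fibres f n - agree {y. \<omega> y} T)) sequentially)
    \<and> (\<forall>\<epsilon>>0. eventually (\<lambda>k. card ({y. \<omega> y} \<inter> factorial_block k)
      \<le> (p + \<epsilon>) * card (factorial_block k)) sequentially)"
    by (intro AE_ex AE_conjI AE_odd_fibres_typical AE_factorial_blocks_typical assms)
  then show thesis
    using that by blast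
qed

theorem theorem1p8:
  fixes p :: real
  assumes "0 \<le> p" and "p \<le> 1/2"
  shows "\<exists>D. m_degree D \<and> Gamma_m D = ereal p"
proof -
  obtain E :: "nat \<Rightarrow> nat set" where E: "range E = {R. computable_set R}"
    using range_from_nat_into[OF _ countable_computable_set] computable_set_empty by blast
  obtain W where odd_fibres_typical: "\<And>f \<epsilon>. computable_fun f \<Longrightarrow> \<epsilon> > 0 \<Longrightarrow> eventually (\<lambda>n.
      p * card (odd_fibres f n) - \<epsilon> * real n \<le> card (odd_fibres f n - agree W (diagonal_set E)))
      sequentially"
    and blocks_typical: "\<And>\<epsilon>. \<epsilon> > 0 \<Longrightarrow> eventually (\<lambda>k.
      card (W \<inter> factorial_block k) \<le> (p + \<epsilon>) * card (factorial_block k)) sequentially"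
    using exists_typical_perturbation[OF assms, where T="diagonal_set E"] by blast
  define B where "B = agree W (diagonal_set E)"
  have "gamma B \<le> ereal p"
  proof (rule gamma_le_factorial_blocks[OF assms(1) blocks_typical])
    fix R assume "computable_set R"
    then obtain i where "R = E i"
      using E by blast
    with frequently_diagonal_set_eq[of E i]
    show "frequently (\<lambda>k. agree B R \<inter> factorial_block k \<subseteq> W) sequentially"
      by (auto elim!: frequently_elim1 simp: B_def agree_def)
  qed
  moreover have "ereal p \<le> gamma A" if "A \<le>\<^sub>m B" for A
  proof -
    obtain f where f: "computable_fun f" and "A = f -` B"
      using \<open>A \<le>\<^sub>m B\<close> unfolding m_reducible_def by blast
    then show ?thesis
      using gamma_ge_odd_rank[OF assms(2) f odd_fibres_typical[OF f]] by (simp add: B_def)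
  qed
  ultimately have "Gamma_m {A. A \<le>\<^sub>m B \<and> B \<le>\<^sub>m A} = ereal p"
    by (rule Gamma_m_degree_eq)
  then show ?thesis
    unfolding m_degree_def by blast
qed

end
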